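(* Let $w\in\mathcal S_n$. Then $\Gamma(a_{\min},(x,y,z))=0$ and $\Gamma(a_{\max},(x,y,z))=1$ for every triple $(x,y,z)\in\mathrm T_w$.
   Context: Permutations are in one-line notation; $\mathrm{Des}(u)=\{i: u_i>u_{i+1}\}$. A word $a=a_1\cdots a_\ell$ with letters in $\{1,\dots,n-1\}$ acts on a word of length $n$ by successively swapping the entries in positions $a_j$ and $a_j+1$. $\mathrm R(w)$ is the set of reduced words of $w$ (words of length $\ell(w)$, the number of inversions, whose action on $12\cdots n$ yields $w$). The word $a_{\min}$ (resp. $a_{\max}$) is defined as follows: set $w^0=w$; for $j=0,1,\dots,\ell(w)-1$ let $i_j$ be the smallest (resp. largest) element of $\mathrm{Des}(w^j)$ and let $w^{j+1}$ be obtained from $w^j$ by swapping the entries in positions $i_j$ and $i_j+1$; then $w^{\ell(w)}=12\cdots n$ and $a_{\min}$ (resp. $a_{\max}$) is the reduced word $i_{\ell(w)-1}\cdots i_1 i_0$. For $a\in\mathrm R(w)$ and an inversion $(p,q)$ of $w$ ($p>q$, $p$ left of $q$ in $w$), $P_a(p,q)$ is the index of the step of $a$ at which $p$ and $q$ are swapped. $\mathrm T_w$ is the set of triples $(x,y,z)$, $x<y<z$, with $z,y,x$ appearing in this order in $w$. $\Gamma(a,(x,y,z))=1$ if $P_a(y,x)>P_a(z,y)$ and $0$ otherwise. *)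

theory Defs
  imports Main
begin

text \<open>Permutations of {1..n} in one-line notation are lists; positions are 1-based
  as in the paper, so the entry in position i of u is u ! (i - 1).\<close>

definition is_perm :: "nat \<Rightarrow> nat list \<Rightarrow> bool" where
  "is_perm n w \<longleftrightarrow> length w = n \<and> distinct w \<and> set w = {1..n}"

definition id_word :: "nat \<Rightarrow> nat list" where
  "id_word n = [1..<n+1]"

definition Des :: "nat list \<Rightarrow> nat set" where
  "Des u = {i. 1 \<le> i \<and> i < length u \<and> u ! (i - 1) > u ! i}"

definition swp :: "nat list \<Rightarrow> nat \<Rightarrow> nat list" where
  "swp u i = u[i - 1 := u ! i, i := u ! (i - 1)]"

definition act :: "nat list \<Rightarrow> nat list \<Rightarrow> nat list" where
  "act a u = foldl swp u a"

text \<open>Length = number of inversions.\<close>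
definition inv_count :: "nat list \<Rightarrow> nat" where
  "inv_count w = card {(i, j). i < j \<and> j < length w \<and> w ! i > w ! j}"

definition reduced_words :: "nat \<Rightarrow> nat list \<Rightarrow> nat list set" where
  "reduced_words n w = {a. length a = inv_count w \<and> set a \<subseteq> {1..n-1} \<and> act a (id_word n) = w}"

fun desc_seq :: "(nat set \<Rightarrow> nat) \<Rightarrow> nat list \<Rightarrow> nat \<Rightarrow> nat list" where
  "desc_seq sel u 0 = []"
| "desc_seq sel u (Suc k) = (let i = sel (Des u) in i # desc_seq sel (swp u i) k)"

definition a_min :: "nat list \<Rightarrow> nat list" where
  "a_min w = rev (desc_seq Min w (inv_count w))"

definition a_max :: "nat list \<Rightarrow> nat list" where
  "a_max w = rev (desc_seq Max w (inv_count w))"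

text \<open>P_a(p,q): the (1-based) index j of the step of a (acting on 12...n) at which
  p and q are swapped.\<close>
definition P :: "nat \<Rightarrow> nat list \<Rightarrow> nat \<Rightarrow> nat \<Rightarrow> nat" where
  "P n a p q = (LEAST j. 1 \<le> j \<and> j \<le> length a \<and>
      (let u = act (take (j - 1) a) (id_word n); k = a ! (j - 1)
       in {u ! (k - 1), u ! k} = {p, q}))"

definition T :: "nat list \<Rightarrow> (nat \<times> nat \<times> nat) set" where
  "T w = {(x, y, z). x < y \<and> y < z \<and>
     (\<exists>i j k. i < j \<and> j < k \<and> k < length w \<and> w ! i = z \<and> w ! j = y \<and> w ! k = x)}"

definition Gamma :: "nat \<Rightarrow> nat list \<Rightarrow> nat \<times> nat \<times> nat \<Rightarrow> nat" where
  "Gamma n a t = (case t of (x, y, z) \<Rightarrow> if P n a y x > P n a z y then 1 else 0)"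

end

theory Submission
  imports Defs "HOL-Library.Multiset" "HOL-Combinatorics.Transposition"
begin

(*
  Read from right to left, a_min (resp. a_max) sorts w into 12...n by always swapping its
  leftmost (resp. rightmost) descent, and each inversion (p, q) of w is exchanged at exactly one
  sorting step s, so that P_a(p, q) = l(w) - s.  Let (x, y, z) be in T_w.  When y and x are
  exchanged at the leftmost descent, the entries to the left of y are increasing, so z has already
  moved past y: the pair (z, y) was exchanged earlier, i.e. P_a(y, x) < P_a(z, y).  Symmetrically,
  when z and y are exchanged at the rightmost descent, the entries to the right of y are increasing,
  so x is already left of y, and the order of the two steps is reversed.
*)

lemma length_swp [simp]: "length (swp u k) = length u"
  by (simp add: swp_def)

lemma swp_nth:
  "0 < k \<Longrightarrow> k < length u \<Longrightarrow> i < length u \<Longrightarrow> swp u k ! i = u ! transpose (k - 1) k i"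
  by (auto simp: swp_def nth_list_update transpose_def)

lemma swp_swp: "0 < k \<Longrightarrow> k < length u \<Longrightarrow> swp (swp u k) k = u"
  by (rule nth_equalityI) (auto simp: swp_nth transpose_def)

lemma mset_swp: "0 < k \<Longrightarrow> k < length u \<Longrightarrow> mset (swp u k) = mset u"
  unfolding swp_def by (rule mset_swap) auto

lemma is_perm_swp: "is_perm n u \<Longrightarrow> 0 < k \<Longrightarrow> k < length u \<Longrightarrow> is_perm n (swp u k)"
  unfolding is_perm_def by (metis length_swp mset_swp mset_eq_setD mset_eq_imp_distinct_iff)

lemma finite_Des: "finite (Des u)"
  by (rule finite_subset[of _ "{..<length u}"]) (auto simp: Des_def)

lemma inversion_imp_Des_between:
  "i < j \<Longrightarrow> j < length u \<Longrightarrow> u ! j < u ! i \<Longrightarrow> \<exists>d\<in>Des u. i < d \<and> d \<le> j"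
proof (induction j)
  case (Suc j)
  show ?case
  proof (cases "u ! Suc j < u ! j")
    case True
    with Suc.prems show ?thesis by (auto simp: Des_def)
  next
    case False
    with Suc.prems have "i < j" "u ! j < u ! i" by (auto simp: less_Suc_eq)
    with Suc.IH Suc.prems show ?thesis by fastforce
  qed
qed simp

definition inversions :: "nat list \<Rightarrow> (nat \<times> nat) set" where
  "inversions u = {(i, j). i < j \<and> j < length u \<and> u ! j < u ! i}"

lemma inv_count_eq_card_inversions: "inv_count u = card (inversions u)"
  by (simp add: inv_count_def inversions_def)

lemma finite_inversions: "finite (inversions u)"
  by (rule finite_subset[of _ "{..<length u} \<times> {..<length u}"]) (auto simp: inversions_def)

lemma transpose_less_iff:
  fixes i j k :: nat
  shows "0 < k \<Longrightarrow> {i, j} \<noteq> {k - 1, k} \<Longrightarrow> transpose (k - 1) k i < transpose (k - 1) k j \<longleftrightarrow> i < j"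
  by (auto simp: transpose_def)

lemma transpose_less_length_iff:
  fixes i k m :: nat
  shows "k < m \<Longrightarrow> transpose (k - 1) k i < m \<longleftrightarrow> i < m"
  by (auto simp: transpose_def)

lemma inversions_swp_iff:
  assumes k: "k \<in> Des u"
  shows "(i, j) \<in> inversions (swp u k) \<longleftrightarrow>
    (transpose (k - 1) k i, transpose (k - 1) k j) \<in> inversions u - {(k - 1, k)}"
proof -
  have k1: "0 < k" "k < length u" "u ! k < u ! (k - 1)" using k by (auto simp: Des_def)
  define t where "t = transpose (k - 1) k"
  have "(i, j) \<in> inversions (swp u k) \<longleftrightarrow> (t i, t j) \<in> inversions u - {(k - 1, k)}"
  proof (cases "{i, j} = {k - 1, k}")
    case True
    with k1 show ?thesis by (auto simp: doubleton_eq_iff inversions_def swp_nth t_def)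
  next
    case False
    then have "(t i, t j) \<noteq> (k - 1, k)" by (auto simp: t_def transpose_def)
    moreover have "t i < t j \<longleftrightarrow> i < j"
      unfolding t_def by (rule transpose_less_iff[OF k1(1) False])
    moreover have "t l < length u \<longleftrightarrow> l < length u" for l
      unfolding t_def by (rule transpose_less_length_iff[OF k1(2)])
    moreover have "swp u k ! l = u ! t l" if "l < length u" for l
      using k1 that by (simp add: t_def swp_nth)
    ultimately show ?thesis
      by (auto simp: inversions_def)
  qed
  then show ?thesis by (simp only: t_def)
qed

lemma inv_count_swp:
  assumes k: "k \<in> Des u"
  shows "inv_count u = Suc (inv_count (swp u k))"
proof -
  let ?t = "map_prod (transpose (k - 1) k) (transpose (k - 1) k)"
  have "inversions (swp u k) = ?t -` (inversions u - {(k - 1, k)})"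
    using inversions_swp_iff[OF k] by auto
  moreover have "bij ?t"
    by (simp add: bij_def map_prod_surj prod.inj_map inj_transpose surj_transpose)
  ultimately have "card (inversions (swp u k)) = card (inversions u - {(k - 1, k)})"
    by (simp add: bij_def card_vimage_inj)
  moreover have "(k - 1, k) \<in> inversions u"
    using k by (auto simp: Des_def inversions_def)
  then have "card (inversions u) = Suc (card (inversions u - {(k - 1, k)}))"
    by (rule card_Suc_Diff1[OF finite_inversions, symmetric])
  ultimately show ?thesis
    by (simp add: inv_count_eq_card_inversions)
qed

lemma Des_nonempty:
  assumes "0 < inv_count u"
  shows "Des u \<noteq> {}"
proof -
  from assms obtain i j where "i < j" "j < length u" "u ! j < u ! i"
    using finite_inversions by (auto simp: inv_count_eq_card_inversions card_gt_0_iff inversions_def)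
  from inversion_imp_Des_between[OF this] show ?thesis by blast
qed

lemma inv_count_0_imp_id_word:
  assumes "is_perm n u" "inv_count u = 0"
  shows "u = id_word n"
proof (rule sorted_distinct_set_unique)
  have "inversions u = {}"
    using assms(2) finite_inversions by (simp add: inv_count_eq_card_inversions)
  then show "sorted u"
    unfolding sorted_iff_nth_mono_less
  proof (intro allI impI)
    fix i j assume "inversions u = {}" "i < j" "j < length u"
    then have "(i, j) \<notin> inversions u" by blast
    with \<open>i < j\<close> \<open>j < length u\<close> show "u ! i \<le> u ! j"
      unfolding inversions_def by simp
  qed
  show "sorted (id_word n)" "distinct (id_word n)"
    by (simp_all add: id_word_def del: upt_Suc)
  have "set (id_word n) = {1..n}"
    by (simp add: id_word_def atLeastLessThanSuc_atLeastAtMost del: upt_Suc)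
  then show "distinct u" "set u = set (id_word n)"
    using assms(1) by (simp_all add: is_perm_def)
qed

definition precedes :: "nat list \<Rightarrow> nat \<Rightarrow> nat \<Rightarrow> bool" where
  "precedes u p q \<longleftrightarrow> (\<exists>i j. i < j \<and> j < length u \<and> u ! i = p \<and> u ! j = q)"

lemma T_imp_precedes:
  assumes "(x, y, z) \<in> T w"
  shows "x < y" "y < z" "precedes w z y" "precedes w y x"
proof -
  from assms obtain i j k where "x < y" "y < z"
    and ijk: "i < j" "j < k" "k < length w" "w ! i = z" "w ! j = y" "w ! k = x"
    unfolding T_def by auto
  then show "x < y" "y < z" by simp_all
  show "precedes w z y" unfolding precedes_def
    using ijk by (intro exI[of _ i] exI[of _ j]) simp
  show "precedes w y x" unfolding precedes_def
    using ijk by (intro exI[of _ j] exI[of _ k]) simp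
qed

lemma swapped_entries_swp:
  "0 < k \<Longrightarrow> k < length u \<Longrightarrow> {swp u k ! (k - 1), swp u k ! k} = {u ! (k - 1), u ! k}"
  by (simp add: swp_nth insert_commute)

lemma precedes_swp_iff:
  assumes "{p, q} \<noteq> {u ! (k - 1), u ! k}" "0 < k" "k < length u"
  shows "precedes (swp u k) p q \<longleftrightarrow> precedes u p q"
proof -
  have *: "precedes (swp v k) p q"
    if pq: "precedes v p q" and not_swapped: "{p, q} \<noteq> {v ! (k - 1), v ! k}"
      and k_len: "k < length v" for v
  proof -
    obtain i j where ij: "i < j" "j < length v" "v ! i = p" "v ! j = q"
      using pq unfolding precedes_def by blast
    have ne: "{i, j} \<noteq> {k - 1, k}"
    proof
      assume "{i, j} = {k - 1, k}"
      then have "(!) v ` {i, j} = (!) v ` {k - 1, k}" by (rule arg_cong)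
      with not_swapped ij show False by simp
    qed
    define t where "t = transpose (k - 1) k"
    have "t i < t j" "t j < length v"
      using ij transpose_less_iff[OF \<open>0 < k\<close> ne] transpose_less_length_iff[OF k_len]
      by (simp_all add: t_def)
    moreover have "swp v k ! t l = v ! l" if "l < length v" for l
      using that \<open>0 < k\<close> \<open>k < length v\<close> transpose_less_length_iff[OF \<open>k < length v\<close>]
      by (simp add: t_def swp_nth)
    ultimately show ?thesis
      unfolding precedes_def using ij by (metis length_swp order.strict_trans)
  qed
  show ?thesis
  proof
    assume "precedes (swp u k) p q"
    moreover have "{p, q} \<noteq> {swp u k ! (k - 1), swp u k ! k}"
      unfolding swapped_entries_swp[OF assms(2,3)] by (rule assms(1))
    ultimately have "precedes (swp (swp u k) k) p q"
      using *[of "swp u k"] assms(3) by simp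
    then show "precedes u p q" using assms(2,3) by (simp add: swp_swp)
  qed (use *[of u] assms in simp)
qed

lemma Des_entries_eq:
  "k \<in> Des u \<Longrightarrow> q < p \<Longrightarrow> {u ! (k - 1), u ! k} = {p, q} \<Longrightarrow> u ! (k - 1) = p \<and> u ! k = q"
  by (auto simp: Des_def doubleton_eq_iff)

lemma precedes_swp_Des:
  assumes "distinct u" "k \<in> Des u"
  shows "precedes u (u ! (k - 1)) (u ! k)" "\<not> precedes (swp u k) (u ! (k - 1)) (u ! k)"
proof -
  have k: "0 < k" "k < length u" using assms(2) by (auto simp: Des_def)
  then show "precedes u (u ! (k - 1)) (u ! k)"
    unfolding precedes_def by (intro exI[of _ "k - 1"] exI[of _ k]) auto
  have dist: "distinct (swp u k)" using assms(1) k by (metis mset_swp mset_eq_imp_distinct_iff)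
  have s: "swp u k ! (k - 1) = u ! k" "swp u k ! k = u ! (k - 1)"
    using k by (auto simp: swp_nth)
  show "\<not> precedes (swp u k) (u ! (k - 1)) (u ! k)"
  proof
    assume "precedes (swp u k) (u ! (k - 1)) (u ! k)"
    then obtain i j where "i < j" "j < length u" "swp u k ! i = swp u k ! k" "swp u k ! j = swp u k ! (k - 1)"
      unfolding precedes_def s by auto
    with dist k have "i = k" "j = k - 1"
      by (simp_all add: nth_eq_iff_index_eq)
    with \<open>i < j\<close> show False by simp
  qed
qed

lemma not_precedes_swp_Des:
  assumes "distinct u" "k \<in> Des u" "q < p" "\<not> precedes u p q"
  shows "\<not> precedes (swp u k) p q"
proof (cases "{u ! (k - 1), u ! k} = {p, q}")
  case True
  with assms(2,3) have "u ! (k - 1) = p" "u ! k = q" using Des_entries_eq by simp_all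
  with assms precedes_swp_Des(1) show ?thesis by blast
next
  case False
  with assms precedes_swp_iff show ?thesis by (auto simp: Des_def)
qed

lemma precedes_Min_Des:
  assumes "distinct u" "Des u \<noteq> {}" "precedes u p (u ! (Min (Des u) - 1))"
  shows "p < u ! (Min (Des u) - 1)"
proof (rule ccontr)
  let ?k = "Min (Des u)"
  have k: "?k \<in> Des u" using assms(2) finite_Des by (rule Min_in[rotated])
  obtain i j where ij: "i < j" "j < length u" "u ! i = p" "u ! j = u ! (?k - 1)"
    using assms(3) unfolding precedes_def by blast
  with assms(1) k have j: "j = ?k - 1" by (auto simp: Des_def nth_eq_iff_index_eq)
  moreover have "u ! i \<noteq> u ! j" using ij(1,2) assms(1) by (simp add: nth_eq_iff_index_eq)
  moreover assume "\<not> p < u ! (?k - 1)"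
  ultimately have "u ! j < u ! i" using ij(3,4) by simp
  then obtain d where d: "d \<in> Des u" "d \<le> j"
    using inversion_imp_Des_between[OF ij(1,2)] by blast
  moreover have "0 < ?k" using k by (simp add: Des_def)
  moreover have "?k \<le> d" using d(1) finite_Des by simp
  ultimately show False using j by linarith
qed

lemma precedes_Max_Des:
  assumes "distinct u" "Des u \<noteq> {}" "precedes u (u ! Max (Des u)) q"
  shows "u ! Max (Des u) < q"
proof (rule ccontr)
  let ?k = "Max (Des u)"
  have k: "?k \<in> Des u" using assms(2) finite_Des by (rule Max_in[rotated])
  obtain i j where ij: "i < j" "j < length u" "u ! i = u ! ?k" "u ! j = q"
    using assms(3) unfolding precedes_def by blast
  with assms(1) k have i: "i = ?k" by (auto simp: Des_def nth_eq_iff_index_eq)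
  moreover have "u ! i \<noteq> u ! j" using ij(1,2) assms(1) by (simp add: nth_eq_iff_index_eq)
  moreover assume "\<not> u ! ?k < q"
  ultimately have "u ! j < u ! i" using ij(3,4) by simp
  then obtain d where d: "d \<in> Des u" "i < d"
    using inversion_imp_Des_between[OF ij(1,2)] by blast
  then have "d \<le> ?k" using finite_Des by simp
  with d i show False by simp
qed

lemma precedes_id_word: "precedes (id_word n) p q \<Longrightarrow> p < q"
  by (auto simp: precedes_def id_word_def simp del: upt_Suc)

fun sort_state :: "(nat set \<Rightarrow> nat) \<Rightarrow> nat list \<Rightarrow> nat \<Rightarrow> nat list" where
  "sort_state sel u 0 = u"
| "sort_state sel u (Suc m) = swp (sort_state sel u m) (sel (Des (sort_state sel u m)))"

lemma sort_state_Suc_left: "sort_state sel u (Suc m) = sort_state sel (swp u (sel (Des u))) m"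
  by (induction m) auto

lemma length_desc_seq [simp]: "length (desc_seq sel u k) = k"
  by (induction k arbitrary: u) (auto simp: Let_def)

lemma nth_desc_seq: "m < k \<Longrightarrow> desc_seq sel u k ! m = sel (Des (sort_state sel u m))"
proof (induction k arbitrary: u m)
  case (Suc k)
  then show ?case by (cases m) (auto simp: Let_def sort_state_Suc_left[symmetric])
qed simp

locale descent_sort =
  fixes sel :: "nat set \<Rightarrow> nat" and n :: nat and w :: "nat list"
  assumes sel_in: "\<And>D. finite D \<Longrightarrow> D \<noteq> {} \<Longrightarrow> sel D \<in> D"
    and is_perm_w: "is_perm n w"
begin

abbreviation "L \<equiv> inv_count w"
abbreviation "state \<equiv> sort_state sel w"
abbreviation "word \<equiv> rev (desc_seq sel w L)"

definition pos :: "nat \<Rightarrow> nat" where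
  "pos m = sel (Des (state m))"

lemma state_Suc [simp]: "state (Suc m) = swp (state m) (pos m)"
  by (simp add: pos_def)

declare sort_state.simps(2) [simp del]

definition swapped :: "nat \<Rightarrow> nat set" where
  "swapped m = {state m ! (pos m - 1), state m ! pos m}"

lemma state_invariant: "m \<le> L \<Longrightarrow> is_perm n (state m) \<and> inv_count (state m) + m = L"
proof (induction m)
  case (Suc m)
  then have ih: "is_perm n (state m)" "inv_count (state m) + m = L" by auto
  with Suc.prems have "Des (state m) \<noteq> {}" by (intro Des_nonempty) simp
  then have k: "pos m \<in> Des (state m)" unfolding pos_def using sel_in finite_Des by blast
  then have "0 < pos m" "pos m < length (state m)" by (simp_all add: Des_def)
  then show ?case
    using ih is_perm_swp[OF ih(1)] inv_count_swp[OF k] unfolding state_Suc by simp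
qed (simp add: is_perm_w)

lemma pos_Des: "m < L \<Longrightarrow> pos m \<in> Des (state m)"
  using state_invariant[of m] Des_nonempty[of "state m"] sel_in finite_Des
  unfolding pos_def by simp

lemma distinct_state: "m \<le> L \<Longrightarrow> distinct (state m)"
  using state_invariant by (auto simp: is_perm_def)

lemma state_L: "state L = id_word n"
  using state_invariant[of L] inv_count_0_imp_id_word by simp

lemma nth_word: "m < L \<Longrightarrow> word ! m = pos (L - Suc m)"
  by (simp add: rev_nth nth_desc_seq pos_def)

lemma act_take_word: "m \<le> L \<Longrightarrow> act (take m word) (id_word n) = state (L - m)"
proof (induction m)
  case 0
  then show ?case by (simp add: act_def state_L)
next
  case (Suc m)
  let ?s = "L - Suc m"
  have "L - m = Suc ?s" using Suc.prems by simp
  have "act (take (Suc m) word) (id_word n) = swp (act (take m word) (id_word n)) (word ! m)"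
    using Suc.prems by (simp add: act_def take_Suc_conv_app_nth)
  also have "\<dots> = swp (swp (state ?s) (pos ?s)) (pos ?s)"
    using Suc by (simp add: nth_word \<open>L - m = Suc ?s\<close>)
  also have "\<dots> = state ?s"
    using pos_Des[of ?s] Suc.prems by (intro swp_swp) (auto simp: Des_def)
  finally show ?case .
qed

text \<open>Step j of the reduced word undoes sorting step L - j.\<close>

lemma swapped_at_step:
  assumes "1 \<le> j" "j \<le> L"
  shows "(let u = act (take (j - 1) word) (id_word n); k = word ! (j - 1) in {u ! (k - 1), u ! k})
    = swapped (L - j)"
proof -
  have "L - (j - 1) = Suc (L - j)" using assms by simp
  then have "act (take (j - 1) word) (id_word n) = swp (state (L - j)) (pos (L - j))"
    using assms act_take_word[of "j - 1"] by simp
  moreover have "word ! (j - 1) = pos (L - j)"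
    using assms by (simp add: nth_word)
  moreover have "0 < pos (L - j)" "pos (L - j) < length (state (L - j))"
    using pos_Des[of "L - j"] assms by (auto simp: Des_def)
  ultimately show ?thesis
    unfolding swapped_def Let_def by (simp only: swapped_entries_swp)
qed

lemma not_precedes_state_mono:
  assumes "q < p" "\<not> precedes (state s) p q" "s \<le> t" "t \<le> L"
  shows "\<not> precedes (state t) p q"
  using assms(3,2)
proof (induction t rule: dec_induct)
  case (step m)
  with assms(1,4) show ?case
    using not_precedes_swp_Des[OF distinct_state pos_Des] unfolding state_Suc by simp
qed

definition swap_step :: "nat \<Rightarrow> nat \<Rightarrow> nat" where
  "swap_step p q = (LEAST s. \<not> precedes (state (Suc s)) p q)"

lemma swap_step_characterization:
  assumes "q < p" "precedes w p q"
  shows swap_step_less: "swap_step p q < L"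
    and precedes_state_iff: "t \<le> L \<Longrightarrow> precedes (state t) p q \<longleftrightarrow> t \<le> swap_step p q"
proof -
  have "\<not> precedes (state L) p q"
  proof
    assume "precedes (state L) p q"
    then have "p < q" unfolding state_L by (rule precedes_id_word)
    with assms(1) show False by simp
  qed
  moreover have "L \<noteq> 0"
  proof
    assume "L = 0"
    with calculation assms(2) show False by simp
  qed
  ultimately have L: "\<not> precedes (state (Suc (L - 1))) p q" by simp
  then have "swap_step p q \<le> L - 1"
    unfolding swap_step_def by (rule Least_le)
  with \<open>L \<noteq> 0\<close> show "swap_step p q < L" by simp
  have stays: "precedes (state t) p q" if "t \<le> swap_step p q" for t
  proof (cases t)
    case (Suc t')
    with that show ?thesis
      using not_less_Least[of t' "\<lambda>s. \<not> precedes (state (Suc s)) p q"]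
      unfolding swap_step_def by simp
  qed (simp add: assms(2))
  have leaves: "\<not> precedes (state (Suc (swap_step p q))) p q"
    unfolding swap_step_def using L by (rule LeastI)
  show "precedes (state t) p q \<longleftrightarrow> t \<le> swap_step p q" if "t \<le> L"
  proof (cases "t \<le> swap_step p q")
    case False
    then have "Suc (swap_step p q) \<le> t" by simp
    with False show ?thesis using not_precedes_state_mono[OF assms(1) leaves _ that] by simp
  qed (simp add: stays)
qed

lemma swapped_iff_swap_step:
  assumes "q < p" "precedes w p q" "s < L"
  shows "swapped s = {p, q} \<longleftrightarrow> s = swap_step p q"
proof
  assume "swapped s = {p, q}"
  then have "state s ! (pos s - 1) = p" "state s ! pos s = q"
    using Des_entries_eq[OF pos_Des[OF assms(3)] assms(1)] by (simp_all add: swapped_def)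
  then have "precedes (state s) p q" "\<not> precedes (state (Suc s)) p q"
    using precedes_swp_Des[OF distinct_state pos_Des[OF assms(3)]] assms(3) by simp_all
  then show "s = swap_step p q"
    using precedes_state_iff[OF assms(1,2), of s] precedes_state_iff[OF assms(1,2), of "Suc s"] assms(3)
    by simp
next
  assume "s = swap_step p q"
  then have "precedes (state s) p q" "\<not> precedes (state (Suc s)) p q"
    using precedes_state_iff[OF assms(1,2), of s] precedes_state_iff[OF assms(1,2), of "Suc s"] assms(3)
    by simp_all
  moreover have "0 < pos s" "pos s < length (state s)"
    using pos_Des[OF assms(3)] by (simp_all add: Des_def)
  ultimately show "swapped s = {p, q}"
    using precedes_swp_iff[of p q "state s" "pos s"] unfolding swapped_def by auto
qed

lemma P_word:
  assumes "q < p" "precedes w p q"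
  shows "P n word p q = L - swap_step p q"
  unfolding P_def
proof (rule Least_equality)
  have step: "(let u = act (take (j - 1) word) (id_word n); k = word ! (j - 1) in {u ! (k - 1), u ! k} = {p, q})
      \<longleftrightarrow> j = L - swap_step p q" if "1 \<le> j" "j \<le> L" for j
  proof -
    have "(let u = act (take (j - 1) word) (id_word n); k = word ! (j - 1) in {u ! (k - 1), u ! k} = {p, q})
        \<longleftrightarrow> swapped (L - j) = {p, q}"
      by (simp only: Let_def swapped_at_step[OF that, unfolded Let_def])
    also have "\<dots> \<longleftrightarrow> L - j = swap_step p q"
      using that by (intro swapped_iff_swap_step[OF assms]) simp
    also have "\<dots> \<longleftrightarrow> j = L - swap_step p q"
      using that swap_step_less[OF assms] by arith
    finally show ?thesis .
  qed
  then show "1 \<le> L - swap_step p q \<and> L - swap_step p q \<le> length word \<and>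
      (let u = act (take (L - swap_step p q - 1) word) (id_word n); k = word ! (L - swap_step p q - 1)
       in {u ! (k - 1), u ! k} = {p, q})"
    using step[of "L - swap_step p q"] swap_step_less[OF assms] by simp
  show "L - swap_step p q \<le> j"
    if "1 \<le> j \<and> j \<le> length word \<and>
      (let u = act (take (j - 1) word) (id_word n); k = word ! (j - 1) in {u ! (k - 1), u ! k} = {p, q})"
    for j
    using that step[of j] by simp
qed

lemma Gamma_word:
  assumes "(x, y, z) \<in> T w"
  shows "Gamma n word (x, y, z) = (if swap_step y x < swap_step z y then 1 else 0)"
proof -
  note T = T_imp_precedes[OF assms]
  have "P n word y x = L - swap_step y x" "P n word z y = L - swap_step z y"
    using P_word T by blast+
  moreover have "swap_step y x < L" "swap_step z y < L"
    using swap_step_less T by blast+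
  moreover have "L - swap_step z y < L - swap_step y x \<longleftrightarrow> swap_step y x < swap_step z y"
    using calculation(3,4) by arith
  ultimately show ?thesis by (simp add: Gamma_def)
qed

lemma swap_step_Min:
  assumes "sel = Min" "(x, y, z) \<in> T w"
  shows "swap_step z y < swap_step y x"
proof -
  note T = T_imp_precedes[OF assms(2)]
  let ?s = "swap_step y x"
  let ?u = "state ?s"
  have s: "?s < L" using swap_step_less T by blast
  then have "Des ?u \<noteq> {}" "distinct ?u" using pos_Des distinct_state by auto
  moreover have "?u ! (pos ?s - 1) = y"
    using Des_entries_eq[OF pos_Des[OF s] T(1)] swapped_iff_swap_step[OF T(1,4) s]
    by (simp add: swapped_def)
  moreover have "pos ?s = Min (Des ?u)" unfolding pos_def by (simp add: assms(1))
  ultimately have "\<not> precedes ?u z y"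
    using precedes_Min_Des[of ?u z] T(2) by auto
  then show ?thesis
    using precedes_state_iff[OF T(2,3)] s by simp
qed

lemma swap_step_Max:
  assumes "sel = Max" "(x, y, z) \<in> T w"
  shows "swap_step y x < swap_step z y"
proof -
  note T = T_imp_precedes[OF assms(2)]
  let ?s = "swap_step z y"
  let ?u = "state ?s"
  have s: "?s < L" using swap_step_less T by blast
  then have "Des ?u \<noteq> {}" "distinct ?u" using pos_Des distinct_state by auto
  moreover have "?u ! pos ?s = y"
    using Des_entries_eq[OF pos_Des[OF s] T(2)] swapped_iff_swap_step[OF T(2,3) s]
    by (simp add: swapped_def)
  moreover have "pos ?s = Max (Des ?u)" unfolding pos_def by (simp add: assms(1))
  ultimately have "\<not> precedes ?u y x"
    using precedes_Max_Des[of ?u x] T(1) by auto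
  then show ?thesis
    using precedes_state_iff[OF T(1,4)] s by simp
qed

end

theorem mainTheorem5:
  fixes n :: nat and w :: "nat list"
  assumes "is_perm n w"
  shows "\<forall>t \<in> T w. Gamma n (a_min w) t = 0 \<and> Gamma n (a_max w) t = 1"
proof
  fix t assume "t \<in> T w"
  then obtain x y z where t: "t = (x, y, z)" and xyz: "(x, y, z) \<in> T w"
    by (cases t) auto
  interpret min_sort: descent_sort Min n w
    using assms by unfold_locales auto
  interpret max_sort: descent_sort Max n w
    using assms by unfold_locales auto
  have "Gamma n (a_min w) t = 0"
    using min_sort.Gamma_word[OF xyz] min_sort.swap_step_Min[OF refl xyz]
    by (simp add: a_min_def t)
  moreover have "Gamma n (a_max w) t = 1"
    using max_sort.Gamma_word[OF xyz] max_sort.swap_step_Max[OF refl xyz]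
    by (simp add: a_max_def t)
  ultimately show "Gamma n (a_min w) t = 0 \<and> Gamma n (a_max w) t = 1" ..
qed

end
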